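(* Let $\Omega$ be a countably infinite set and $S=\mathrm{Sym}(\Omega)$. The countable subgroups of $S$ form an equivalence class under $\approx$, and every countable subgroup $G$ satisfies $G\prec S_{(A)}$ for every partition $A$ of $\Omega$ having a common finite bound on the cardinalities of its members and infinitely many members of cardinality $>1$. Moreover, for a subgroup $G\le S$ the following are equivalent: (i) $G$ is countable and closed; (ii) there exists a finite subset $\Gamma\subseteq\Omega$ such that $G_{(\Gamma)}=\{1\}$; (iii) $G$ is discrete.
   Context: $\mathrm{Sym}(\Omega)$ is the group of all permutations of $\Omega$ (acting on the right). $S$ carries the function topology (pointwise convergence, $\Omega$ discrete); "closed" and "discrete" refer to this topology (discrete meaning discrete in the subspace topology). For a partition $A$ of $\Omega$, $S_{(A)}=\{f\in S:\Sigma f=\Sigma\text{ for all }\Sigma\in A\}$. $G_{(\Gamma)}$ denotes the pointwise stabilizer of $\Gamma$ in $G$. For subgroups $G_1,G_2\le S$: $G_1\preccurlyeq G_2$ means there is a finite $U\subseteq S$ with $G_1\le\langle G_2\cup U\rangle$; $G_1\approx G_2$ means both $G_1\preccurlyeq G_2$ and $G_2\preccurlyeq G_1$; $G_1\prec G_2$ means $G_1\preccurlyeq G_2$ and not $G_2\preccurlyeq G_1$. *)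

theory Defs
  imports "HOL-Analysis.Analysis" "HOL-Algebra.Bij" "HOL-Algebra.Generated_Groups"
    "HOL-Library.Disjoint_Sets"
begin

definition SymG :: "('a \<Rightarrow> 'a) monoid" where
  "SymG = BijGroup (UNIV :: 'a set)"

definition sym_top :: "('a \<Rightarrow> 'a) topology" where
  "sym_top = subtopology (product_topology (\<lambda>_. discrete_topology (UNIV :: 'a set)) UNIV)
                         (carrier SymG)"

definition sym_closed :: "('a \<Rightarrow> 'a) set \<Rightarrow> bool" where
  "sym_closed G \<longleftrightarrow> closedin sym_top G"

definition sym_discrete :: "('a \<Rightarrow> 'a) set \<Rightarrow> bool" where
  "sym_discrete G \<longleftrightarrow> subtopology sym_top G = discrete_topology G"

definition pstab :: "('a \<Rightarrow> 'a) set \<Rightarrow> 'a set \<Rightarrow> ('a \<Rightarrow> 'a) set" where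
  "pstab G \<Gamma> = {g \<in> G. \<forall>x\<in>\<Gamma>. g x = x}"

definition setwise_stab :: "'a set set \<Rightarrow> ('a \<Rightarrow> 'a) set" where
  "setwise_stab A = {f \<in> carrier SymG. \<forall>\<Sigma>\<in>A. f ` \<Sigma> = \<Sigma>}"

definition sym_preceq :: "('a \<Rightarrow> 'a) set \<Rightarrow> ('a \<Rightarrow> 'a) set \<Rightarrow> bool" (infix "\<preccurlyeq>\<^sub>S" 50) where
  "G1 \<preccurlyeq>\<^sub>S G2 \<longleftrightarrow> (\<exists>U. finite U \<and> U \<subseteq> carrier SymG \<and> G1 \<subseteq> generate SymG (G2 \<union> U))"

definition sym_approx :: "('a \<Rightarrow> 'a) set \<Rightarrow> ('a \<Rightarrow> 'a) set \<Rightarrow> bool" (infix "\<approx>\<^sub>S" 50) where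
  "G1 \<approx>\<^sub>S G2 \<longleftrightarrow> G1 \<preccurlyeq>\<^sub>S G2 \<and> G2 \<preccurlyeq>\<^sub>S G1"

definition sym_prec :: "('a \<Rightarrow> 'a) set \<Rightarrow> ('a \<Rightarrow> 'a) set \<Rightarrow> bool" (infix "\<prec>\<^sub>S" 50) where
  "G1 \<prec>\<^sub>S G2 \<longleftrightarrow> G1 \<preccurlyeq>\<^sub>S G2 \<and> \<not> G2 \<preccurlyeq>\<^sub>S G1"

end

theory Submission
  imports Defs "HOL-Combinatorics.Permutations"
begin

text \<open>Galvin's theorem drives the first two parts: for a cover \<open>\<Omega> = Y\<^sub>1 \<union> Y\<^sub>2\<close> with infinite
  overlap and infinite differences, every permutation is a product of permutations of \<open>Y\<^sub>1\<close> and
  of \<open>Y\<^sub>2\<close>; each of these is conjugate to a permutation of one fixed infinite, coinfinite set,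
  and countably many permutations of that set are commutators of one fixed permutation with
  conjugates of another by powers of a third. So every countable subgroup lies in a finitely
  generated one and is \<open>\<approx> {1}\<close>, whereas anything \<open>\<preccurlyeq>\<close> a countable group is countable and \<open>S_(A)\<close>
  contains uncountably many products of transpositions inside distinct blocks.

  \<open>G_(\<Gamma>) = {1}\<close> says that elements of \<open>G\<close> are determined by their restriction to \<open>\<Gamma>\<close>,
  which makes \<open>G\<close> countable, closed and discrete. Conversely, in a countable closed \<open>G\<close>
  without such a finite \<open>\<Gamma>\<close> one can always perturb an element away from a prescribed one
  while fixing it (and its inverse) on a finite set; iterating along an enumeration of \<open>G\<close>
  yields a limit in \<open>G\<close> that differs from every element of \<open>G\<close>.\<close>

section \<open>The symmetric group\<close>

unbundle no m_inv_syntax \<comment> \<open>so that \<open>inv\<close> is the inverse function, not the group inverse\<close>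

lemma carrier_SymG: "carrier SymG = {f. bij f}"
  unfolding SymG_def BijGroup_def Bij_def by auto

lemma group_SymG: "group SymG"
  unfolding SymG_def by (rule group_BijGroup)

lemma one_SymG: "\<one>\<^bsub>SymG\<^esub> = id"
  unfolding SymG_def BijGroup_def by auto

lemma mult_SymG: "bij f \<Longrightarrow> bij g \<Longrightarrow> f \<otimes>\<^bsub>SymG\<^esub> g = f \<circ> g"
  unfolding SymG_def BijGroup_def Bij_def compose_def by auto

lemma inv_SymG:
  assumes "bij f"
  shows "m_inv SymG f = inv f"
proof (rule group.inv_equality[OF group_SymG])
  show "inv f \<otimes>\<^bsub>SymG\<^esub> f = \<one>\<^bsub>SymG\<^esub>"
    using assms by (simp add: mult_SymG one_SymG bij_imp_bij_inv bij_is_inj)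
qed (use assms in \<open>simp_all add: carrier_SymG bij_imp_bij_inv\<close>)

context
  fixes G :: "('a \<Rightarrow> 'a) set"
  assumes G: "subgroup G SymG"
begin

lemma subgroup_SymG_bij: "g \<in> G \<Longrightarrow> bij g"
  using subgroup.subset[OF G] by (auto simp: carrier_SymG)

lemma subgroup_SymG_comp: "g \<in> G \<Longrightarrow> h \<in> G \<Longrightarrow> g \<circ> h \<in> G"
  by (metis subgroup.m_closed[OF G] mult_SymG subgroup_SymG_bij)

lemma subgroup_SymG_inv: "g \<in> G \<Longrightarrow> inv g \<in> G"
  by (metis subgroup.m_inv_closed[OF G] inv_SymG subgroup_SymG_bij)

lemma subgroup_SymG_id: "id \<in> G"
  by (metis subgroup.one_closed[OF G] one_SymG)

end

lemma subgroup_generate_SymG: "K \<subseteq> carrier SymG \<Longrightarrow> subgroup (generate SymG K) SymG"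
  by (rule group.generate_is_subgroup[OF group_SymG])

lemma generate_SymG_subset_words:
  assumes K: "K \<subseteq> carrier SymG"
  shows "generate SymG K \<subseteq> (\<lambda>fs. foldr (\<circ>) fs id) ` lists (K \<union> inv ` K)"
proof
  have foldr_comp: "foldr (\<circ>) fs g = foldr (\<circ>) fs id \<circ> g" for fs and g :: "'a \<Rightarrow> 'a"
    by (induction fs) auto
  fix h assume "h \<in> generate SymG K"
  then show "h \<in> (\<lambda>fs. foldr (\<circ>) fs id) ` lists (K \<union> inv ` K)"
  proof induction
    case one
    show ?case by (rule image_eqI[of _ _ "[]"]) (simp_all add: one_SymG)
  next
    case (incl h)
    then show ?case by (intro image_eqI[of _ _ "[h]"]) auto
  next
    case (inv h)
    then have "m_inv SymG h = inv h"
      using K by (simp add: inv_SymG carrier_SymG subset_iff)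
    with inv show ?case by (intro image_eqI[of _ _ "[inv h]"]) auto
  next
    case (eng h1 h2)
    then obtain fs gs where "fs \<in> lists (K \<union> inv ` K)" "gs \<in> lists (K \<union> inv ` K)"
      "h1 = foldr (\<circ>) fs id" "h2 = foldr (\<circ>) gs id"
      by blast
    moreover have "h1 \<otimes>\<^bsub>SymG\<^esub> h2 = h1 \<circ> h2"
      using eng.hyps subgroup_SymG_bij[OF subgroup_generate_SymG[OF K]] by (simp add: mult_SymG)
    moreover have "foldr (\<circ>) (fs @ gs) id = foldr (\<circ>) fs id \<circ> foldr (\<circ>) gs id"
      by (simp only: foldr_append foldr_comp[of fs "foldr (\<circ>) gs id"])
    ultimately have "h1 \<otimes>\<^bsub>SymG\<^esub> h2 = foldr (\<circ>) (fs @ gs) id"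
      by (simp only:)
    with \<open>fs \<in> lists _\<close> \<open>gs \<in> lists _\<close> show ?case
      by (metis append_in_lists_conv image_eqI)
  qed
qed

lemma countable_generate_SymG:
  assumes "countable K" "K \<subseteq> carrier SymG"
  shows "countable (generate SymG K)"
  using generate_SymG_subset_words[OF assms(2)] by (rule countable_subset) (simp add: assms(1))

definition perm_conj :: "('a \<Rightarrow> 'b) \<Rightarrow> ('a \<Rightarrow> 'a) \<Rightarrow> 'b \<Rightarrow> 'b" where
  "perm_conj c p = c \<circ> p \<circ> inv c"

lemma perm_conj_inv:
  assumes "bij c"
  shows "perm_conj c (perm_conj (inv c) p) = p"
  using assms by (simp add: perm_conj_def fun_eq_iff inv_inv_eq bij_is_inj bij_is_surj surj_f_inv_f)

lemma bij_perm_conj: "bij c \<Longrightarrow> bij p \<Longrightarrow> bij (perm_conj c p)"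
  by (simp add: perm_conj_def bij_comp bij_imp_bij_inv)

lemma perm_conj_hom:
  assumes "bij c"
  shows "perm_conj c \<in> hom SymG SymG"
proof (rule homI)
  fix p q :: "'a \<Rightarrow> 'a" assume "p \<in> carrier SymG" "q \<in> carrier SymG"
  then have "bij p" "bij q" by (simp_all add: carrier_SymG)
  then have "bij (perm_conj c p)" "bij (perm_conj c q)"
    using assms by (simp_all add: bij_perm_conj)
  then show "perm_conj c p \<in> carrier SymG"
    and "perm_conj c (p \<otimes>\<^bsub>SymG\<^esub> q) = perm_conj c p \<otimes>\<^bsub>SymG\<^esub> perm_conj c q"
    using \<open>bij p\<close> \<open>bij q\<close> assms
    by (simp_all add: carrier_SymG mult_SymG perm_conj_def fun_eq_iff bij_is_inj)
qed

lemma perm_conj_generate: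
  assumes "bij c" "C \<subseteq> generate SymG U" "U \<subseteq> carrier SymG"
  shows "perm_conj c ` C \<subseteq> generate SymG (perm_conj c ` U)"
proof -
  interpret group_hom SymG SymG "perm_conj c"
    by (intro group_hom.intro group_hom_axioms.intro group_SymG perm_conj_hom assms(1))
  show ?thesis using assms(2) generate_img[OF assms(3)] by blast
qed

section \<open>Pointwise convergence\<close>

abbreviation pointwise_topology :: "('a \<Rightarrow> 'b) topology" where
  "pointwise_topology \<equiv> product_topology (\<lambda>_. discrete_topology UNIV) UNIV"

definition basic_nbhd :: "('a \<Rightarrow> 'b) \<Rightarrow> 'a set \<Rightarrow> ('a \<Rightarrow> 'b) set" where
  "basic_nbhd f D = {g. \<forall>x\<in>D. g x = f x}"

lemma basic_nbhd_self [simp]: "f \<in> basic_nbhd f D"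
  by (simp add: basic_nbhd_def)

lemma openin_pointwise_discrete:
  "openin pointwise_topology U \<longleftrightarrow> (\<forall>f\<in>U. \<exists>D. finite D \<and> basic_nbhd f D \<subseteq> U)"
proof
  assume U: "openin pointwise_topology U"
  show "\<forall>f\<in>U. \<exists>D. finite D \<and> basic_nbhd f D \<subseteq> U"
  proof
    fix f assume "f \<in> U"
    then obtain V where V: "finite {i. V i \<noteq> UNIV}" "f \<in> Pi\<^sub>E UNIV V" "Pi\<^sub>E UNIV V \<subseteq> U"
      using U unfolding openin_product_topology_alt by auto
    have "basic_nbhd f {i. V i \<noteq> UNIV} \<subseteq> Pi\<^sub>E UNIV V"
    proof (intro subsetI PiE_I)
      fix g i assume "g \<in> basic_nbhd f {i. V i \<noteq> UNIV}"
      then show "g i \<in> V i"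
        using V(2) by (cases "V i = UNIV") (auto simp: basic_nbhd_def)
    qed simp
    with V show "\<exists>D. finite D \<and> basic_nbhd f D \<subseteq> U" by blast
  qed
next
  assume nbhds: "\<forall>f\<in>U. \<exists>D. finite D \<and> basic_nbhd f D \<subseteq> U"
  show "openin pointwise_topology U"
  proof (subst openin_subopen, intro ballI)
    fix f assume "f \<in> U"
    with nbhds obtain D where D: "finite D" "basic_nbhd f D \<subseteq> U" by blast
    define V where "V i = (if i \<in> D then {f i} else UNIV)" for i
    have "basic_nbhd f D = Pi\<^sub>E UNIV V"
      by (auto simp: basic_nbhd_def V_def PiE_UNIV_domain Pi_iff split: if_splits)
    moreover have "{i. V i \<noteq> topspace (discrete_topology UNIV)} \<subseteq> D"
      by (auto simp: V_def)
    then have "openin pointwise_topology (Pi\<^sub>E UNIV V)"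
      using D(1) by (intro product_topology_basis) (auto intro: finite_subset)
    ultimately show "\<exists>T. openin pointwise_topology T \<and> f \<in> T \<and> T \<subseteq> U"
      using D(2) by (metis basic_nbhd_self)
  qed
qed

lemma openin_basic_nbhd:
  "finite D \<Longrightarrow> openin pointwise_topology (basic_nbhd f D)"
  unfolding openin_pointwise_discrete
proof (intro ballI exI conjI)
  fix g assume "finite D" "g \<in> basic_nbhd f D"
  then show "finite D" "basic_nbhd g D \<subseteq> basic_nbhd f D"
    by (auto simp: basic_nbhd_def)
qed

lemma topspace_sym_top: "topspace sym_top = carrier SymG"
  unfolding sym_top_def by simp

lemma openin_subtopology_sym_top:
  assumes "G \<subseteq> carrier SymG"
  shows "openin (subtopology sym_top G) V \<longleftrightarrow>
           V \<subseteq> G \<and> (\<forall>g\<in>V. \<exists>D. finite D \<and> basic_nbhd g D \<inter> G \<subseteq> V)"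
proof -
  have sub: "subtopology sym_top G = subtopology pointwise_topology G"
    unfolding sym_top_def using assms by (simp add: subtopology_subtopology Int_absorb1)
  show ?thesis
  proof
    assume "openin (subtopology sym_top G) V"
    then obtain T where T: "openin pointwise_topology T" "V = T \<inter> G"
      unfolding sub openin_subtopology by blast
    have "\<exists>D. finite D \<and> basic_nbhd g D \<inter> G \<subseteq> V" if "g \<in> V" for g
      using T that unfolding openin_pointwise_discrete by blast
    with T(2) show "V \<subseteq> G \<and> (\<forall>g\<in>V. \<exists>D. finite D \<and> basic_nbhd g D \<inter> G \<subseteq> V)"
      by blast
  next
    assume V: "V \<subseteq> G \<and> (\<forall>g\<in>V. \<exists>D. finite D \<and> basic_nbhd g D \<inter> G \<subseteq> V)"
    show "openin (subtopology sym_top G) V"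
      unfolding sub
    proof (subst openin_subopen, intro ballI)
      fix g assume "g \<in> V"
      with V obtain D where D: "finite D" "basic_nbhd g D \<inter> G \<subseteq> V" by blast
      have "openin (subtopology pointwise_topology G) (basic_nbhd g D \<inter> G)"
        using D(1) by (intro openin_subtopology_Int openin_basic_nbhd)
      then show "\<exists>T. openin (subtopology pointwise_topology G) T \<and>
          g \<in> T \<and> T \<subseteq> V"
        using D(2) \<open>g \<in> V\<close> V by (intro exI[of _ "basic_nbhd g D \<inter> G"]) auto
    qed
  qed
qed

lemma sym_closed_iff:
  assumes G: "G \<subseteq> carrier SymG"
  shows "sym_closed G \<longleftrightarrow> (\<forall>h. bij h \<and> h \<notin> G \<longrightarrow> (\<exists>D. finite D \<and> basic_nbhd h D \<inter> G = {}))"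
proof -
  have top: "subtopology sym_top (carrier SymG) = sym_top"
    by (metis subtopology_topspace topspace_sym_top)
  have "sym_closed G \<longleftrightarrow> openin (subtopology sym_top (carrier SymG)) (carrier SymG - G)"
    unfolding sym_closed_def closedin_def topspace_sym_top top using G by simp
  also have "\<dots> \<longleftrightarrow> (\<forall>h\<in>carrier SymG - G. \<exists>D. finite D \<and>
                       basic_nbhd h D \<inter> carrier SymG \<subseteq> carrier SymG - G)"
    by (subst openin_subtopology_sym_top) auto
  also have "\<dots> \<longleftrightarrow> (\<forall>h. bij h \<and> h \<notin> G \<longrightarrow> (\<exists>D. finite D \<and> basic_nbhd h D \<inter> G = {}))"
  proof -
    have "basic_nbhd h D \<inter> carrier SymG \<subseteq> carrier SymG - G \<longleftrightarrow> basic_nbhd h D \<inter> G = {}" for h D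
      using G by blast
    then show ?thesis by (simp add: carrier_SymG) blast
  qed
  finally show ?thesis .
qed

lemma sym_discrete_iff:
  assumes G: "G \<subseteq> carrier SymG"
  shows "sym_discrete G \<longleftrightarrow> (\<forall>g\<in>G. \<exists>D. finite D \<and> basic_nbhd g D \<inter> G = {g})"
proof -
  have "sym_discrete G \<longleftrightarrow> (\<forall>g\<in>G. openin (subtopology sym_top G) {g})"
    unfolding sym_discrete_def eq_commute[of _ "discrete_topology G"] discrete_topology_unique
    using G by (simp add: topspace_sym_top Int_absorb1)
  also have "\<dots> \<longleftrightarrow> (\<forall>g\<in>G. \<exists>D. finite D \<and> basic_nbhd g D \<inter> G \<subseteq> {g})"
    by (subst openin_subtopology_sym_top[OF G]) auto
  also have "\<dots> \<longleftrightarrow> (\<forall>g\<in>G. \<exists>D. finite D \<and> basic_nbhd g D \<inter> G = {g})"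
  proof -
    have "basic_nbhd g D \<inter> G \<subseteq> {g} \<longleftrightarrow> basic_nbhd g D \<inter> G = {g}" if "g \<in> G" for g D
      using that by auto
    then show ?thesis by simp
  qed
  finally show ?thesis .
qed

section \<open>Finite bases\<close>

lemma pstab_eq_basic_nbhd: "pstab G D = basic_nbhd id D \<inter> G"
  by (auto simp: pstab_def basic_nbhd_def)

lemma agree_on_base_imp_eq:
  assumes G: "subgroup G SymG" and base: "pstab G D = {id}"
    and g: "g \<in> G" and h: "h \<in> G" and agree: "\<forall>x\<in>D. h x = g x"
  shows "h = g"
proof -
  have "bij g" using g by (rule subgroup_SymG_bij[OF G])
  have "inv g \<circ> h \<in> G" using subgroup_SymG_comp[OF G subgroup_SymG_inv[OF G g] h] .
  moreover have "\<forall>x\<in>D. (inv g \<circ> h) x = x"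
    using agree \<open>bij g\<close> by (simp add: bij_is_inj)
  ultimately have "inv g \<circ> h \<in> pstab G D" by (simp add: pstab_def)
  then have "inv g \<circ> h = id" using base by blast
  moreover have "h = g \<circ> (inv g \<circ> h)"
    using \<open>bij g\<close> by (simp add: fun_eq_iff bij_is_surj surj_f_inv_f)
  ultimately show "h = g" by simp
qed

context
  fixes G :: "('a \<Rightarrow> 'a) set" and D :: "'a set"
  assumes G: "subgroup G SymG" and D: "finite D" "pstab G D = {id}"
begin

lemma sym_closed_if_finite_base: "sym_closed G"
  unfolding sym_closed_iff[OF subgroup.subset[OF G]]
proof (intro allI impI)
  fix h assume h: "bij h \<and> h \<notin> G"
  show "\<exists>D'. finite D' \<and> basic_nbhd h D' \<inter> G = {}"
  proof (cases "basic_nbhd h D \<inter> G = {}")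
    case False
    then obtain g where g: "g \<in> G" "\<forall>x\<in>D. g x = h x" by (auto simp: basic_nbhd_def)
    then obtain x0 where x0: "g x0 \<noteq> h x0" using h by (metis ext)
    have "basic_nbhd h (insert x0 D) \<inter> G = {}"
    proof (rule ccontr)
      assume "basic_nbhd h (insert x0 D) \<inter> G \<noteq> {}"
      then obtain k where k: "k \<in> G" "\<forall>x\<in>insert x0 D. k x = h x" by (auto simp: basic_nbhd_def)
      then have "k = g" using g by (intro agree_on_base_imp_eq[OF G D(2)]) auto
      with k(2) x0 show False by simp
    qed
    then show ?thesis using D(1) by blast
  qed (use D(1) in blast)
qed

lemma sym_discrete_if_finite_base: "sym_discrete G"
  unfolding sym_discrete_iff[OF subgroup.subset[OF G]]
proof (intro ballI exI conjI)
  fix g assume "g \<in> G"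
  show "finite D" by (fact D(1))
  show "basic_nbhd g D \<inter> G = {g}"
    using agree_on_base_imp_eq[OF G D(2) \<open>g \<in> G\<close>] \<open>g \<in> G\<close> by (auto simp: basic_nbhd_def)
qed

end

lemma countable_if_finite_base:
  fixes G :: "('a::countable \<Rightarrow> 'a) set"
  assumes G: "subgroup G SymG" and D: "finite D" "pstab G D = {id}"
  shows "countable G"
proof -
  have "inj_on (\<lambda>g. restrict g D) G"
  proof (rule inj_onI)
    fix g h assume "g \<in> G" "h \<in> G" "restrict g D = restrict h D"
    then show "g = h"
      using agree_on_base_imp_eq[OF G D(2)] by (metis restrict_apply')
  qed
  moreover have "(\<lambda>g. restrict g D) ` G \<subseteq> Pi\<^sub>E D (\<lambda>_. UNIV)" by auto
  then have "countable ((\<lambda>g. restrict g D) ` G)"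
    by (rule countable_subset) (intro countable_PiE D(1) countableI_type)
  ultimately show ?thesis by (rule countable_image_inj_on[rotated])
qed


lemma finite_base_if_sym_discrete:
  assumes G: "subgroup G SymG" and "sym_discrete G"
  shows "\<exists>D. finite D \<and> pstab G D = {id}"
proof -
  obtain D where "finite D" "basic_nbhd id D \<inter> G = {id}"
    using assms subgroup_SymG_id[OF G] by (auto simp: sym_discrete_iff[OF subgroup.subset[OF G]])
  then show ?thesis by (auto simp: pstab_eq_basic_nbhd)
qed

lemma finite_subset_incseq_cover:
  assumes "finite D" "incseq \<Gamma>" "\<And>x. \<exists>k. x \<in> \<Gamma> k"
  shows "\<exists>k. D \<subseteq> \<Gamma> k"
  using assms(1)
proof (induction D rule: finite_induct)
  case (insert x D)
  then obtain k m where "D \<subseteq> \<Gamma> k" "x \<in> \<Gamma> m" using assms(3) by blast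
  moreover have "\<Gamma> k \<subseteq> \<Gamma> (max k m)" "\<Gamma> m \<subseteq> \<Gamma> (max k m)"
    using incseqD[OF assms(2)] by simp_all
  ultimately have "insert x D \<subseteq> \<Gamma> (max k m)" by blast
  then show ?case by blast
qed simp

lemma coherent_bij_limit:
  fixes h :: "nat \<Rightarrow> 'a \<Rightarrow> 'a" and \<Gamma> :: "nat \<Rightarrow> 'a set"
  assumes bij: "\<And>k. bij (h k)" and inc: "incseq \<Gamma>" and cover: "\<And>x. \<exists>k. x \<in> \<Gamma> k"
    and coherent: "\<And>k x. x \<in> \<Gamma> k \<Longrightarrow> h (Suc k) x = h k x \<and> inv (h (Suc k)) x = inv (h k) x"
  shows "\<exists>H. bij H \<and> (\<forall>k. \<forall>x\<in>\<Gamma> k. H x = h k x)"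
proof -
  have coh: "h m x = h k x \<and> inv (h m) x = inv (h k) x" if "k \<le> m" "x \<in> \<Gamma> k" for k m x
    using that(1)
  proof (induction m rule: dec_induct)
    case (step m)
    then have "x \<in> \<Gamma> m" using incseqD[OF inc, of k m] that(2) by blast
    with step.IH coherent show ?case by simp
  qed simp
  define H where "H x = h (SOME k. x \<in> \<Gamma> k) x" for x
  have H: "H x = h k x" if "x \<in> \<Gamma> k" for k x
  proof -
    let ?j = "SOME k. x \<in> \<Gamma> k"
    have "x \<in> \<Gamma> ?j" using cover by (rule someI_ex)
    then show ?thesis
      using coh[of ?j "max ?j k" x] coh[of k "max ?j k" x] that by (simp add: H_def)
  qed
  have "inj H"
  proof (rule injI)
    fix x y assume "H x = H y"
    obtain k where "{x, y} \<subseteq> \<Gamma> k"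
      using finite_subset_incseq_cover[of "{x, y}", OF _ inc cover] by auto
    then have "H x = h k x" "H y = h k y" using H by auto
    with \<open>H x = H y\<close> have "h k x = h k y" by simp
    then show "x = y" using bij[of k] by (simp add: bij_is_inj inj_eq)
  qed
  moreover have "y \<in> range H" for y
  proof -
    obtain k m where y: "y \<in> \<Gamma> k" and "inv (h k) y \<in> \<Gamma> m" using cover by blast
    then have x: "inv (h k) y \<in> \<Gamma> (max k m)"
      using incseqD[OF inc, of m "max k m"] by auto
    have "inv (h (max k m)) y = inv (h k) y" using coh y by simp
    then have "H (inv (h k) y) = y"
      using H[OF x] bij by (metis bij_is_surj surj_f_inv_f)
    then show ?thesis by (metis rangeI)
  qed
  ultimately show ?thesis using H by (intro exI[of _ H]) (auto simp: bij_def)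
qed

lemma no_finite_base_perturb:
  assumes G: "subgroup G SymG" and no_base: "\<And>D. finite D \<Longrightarrow> pstab G D \<noteq> {id}"
    and h: "h \<in> G" and \<Gamma>: "finite \<Gamma>"
  shows "\<exists>h'\<in>G. h' \<noteq> g \<and> (\<forall>x\<in>\<Gamma>. h' x = h x \<and> inv h' x = inv h x)"
proof (cases "h = g")
  case True
  have "pstab G (\<Gamma> \<union> inv h ` \<Gamma>) \<noteq> {id}" using no_base \<Gamma> by simp
  moreover have "id \<in> pstab G (\<Gamma> \<union> inv h ` \<Gamma>)"
    using subgroup_SymG_id[OF G] by (simp add: pstab_def)
  ultimately obtain u where u: "u \<in> G" "u \<noteq> id" and u_fix: "\<forall>x\<in>\<Gamma> \<union> inv h ` \<Gamma>. u x = x"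
    by (auto simp: pstab_def)
  have "bij h" "bij u" using subgroup_SymG_bij[OF G] h u(1) by auto
  have "h \<circ> u \<noteq> h"
    using u(2) \<open>bij h\<close> by (auto simp: fun_eq_iff bij_is_inj inj_eq)
  then have "h \<circ> u \<noteq> g" using True by simp
  moreover have "(h \<circ> u) x = h x \<and> inv (h \<circ> u) x = inv h x" if "x \<in> \<Gamma>" for x
  proof -
    have "u (inv h x) = inv h x" using u_fix that by blast
    then have "inv u (inv h x) = inv h x" using \<open>bij u\<close> by (metis bij_is_inj inv_f_f)
    then show ?thesis using u_fix that \<open>bij h\<close> \<open>bij u\<close> by (simp add: o_inv_distrib)
  qed
  ultimately show ?thesis using subgroup_SymG_comp[OF G h u(1)] by blast
qed (use h in blast)

lemma no_finite_base_sequence: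
  assumes G: "subgroup G SymG" and no_base: "\<And>D. finite D \<Longrightarrow> pstab G D \<noteq> {id}"
  shows "\<exists>h \<Gamma>. \<forall>n. h n \<in> G \<and> finite (\<Gamma> n) \<and> \<Gamma> n \<subseteq> \<Gamma> (Suc n) \<and> e n \<in> \<Gamma> (Suc n) \<and>
           (\<forall>x\<in>\<Gamma> n. h (Suc n) x = h n x \<and> inv (h (Suc n)) x = inv (h n) x) \<and>
           (\<exists>x\<in>\<Gamma> (Suc n). h (Suc n) x \<noteq> g n x)"
proof -
  have "\<exists>f. \<forall>n. (fst (f n) \<in> G \<and> finite (snd (f n))) \<and>
      snd (f n) \<subseteq> snd (f (Suc n)) \<and> e n \<in> snd (f (Suc n)) \<and>
      (\<forall>x\<in>snd (f n). fst (f (Suc n)) x = fst (f n) x \<and> inv (fst (f (Suc n))) x = inv (fst (f n)) x) \<and>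
      (\<exists>x\<in>snd (f (Suc n)). fst (f (Suc n)) x \<noteq> g n x)"
  proof (rule dependent_nat_choice)
    show "\<exists>p. fst p \<in> G \<and> finite (snd p)"
      using subgroup_SymG_id[OF G] by (intro exI[of _ "(id, {})"]) simp
  next
    fix p :: "('a \<Rightarrow> 'a) \<times> 'a set" and n :: nat
    assume p: "fst p \<in> G \<and> finite (snd p)"
    then obtain h' where h': "h' \<in> G" "h' \<noteq> g n"
      "\<forall>x\<in>snd p. h' x = fst p x \<and> inv h' x = inv (fst p) x"
      using no_finite_base_perturb[OF G no_base, of "fst p" "snd p" "g n"] by blast
    then obtain x0 where "h' x0 \<noteq> g n x0" by (metis ext)
    with h' p show "\<exists>q. (fst q \<in> G \<and> finite (snd q)) \<and>
       snd p \<subseteq> snd q \<and> e n \<in> snd q \<and>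
       (\<forall>x\<in>snd p. fst q x = fst p x \<and> inv (fst q) x = inv (fst p) x) \<and>
       (\<exists>x\<in>snd q. fst q x \<noteq> g n x)"
      by (intro exI[of _ "(h', insert x0 (insert (e n) (snd p)))"]) auto
  qed
  then obtain f where f: "\<forall>n. (fst (f n) \<in> G \<and> finite (snd (f n))) \<and>
      snd (f n) \<subseteq> snd (f (Suc n)) \<and> e n \<in> snd (f (Suc n)) \<and>
      (\<forall>x\<in>snd (f n). fst (f (Suc n)) x = fst (f n) x \<and> inv (fst (f (Suc n))) x = inv (fst (f n)) x) \<and>
      (\<exists>x\<in>snd (f (Suc n)). fst (f (Suc n)) x \<noteq> g n x)"
    by blast
  show ?thesis
    by (rule exI[of _ "\<lambda>n. fst (f n)"], rule exI[of _ "\<lambda>n. snd (f n)"]) (use f in blast)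
qed

lemma finite_base_if_countable_closed:
  fixes G :: "('a::countable \<Rightarrow> 'a) set"
  assumes G: "subgroup G SymG" and "countable G" and closed: "sym_closed G"
  shows "\<exists>D. finite D \<and> pstab G D = {id}"
proof (rule ccontr)
  assume "\<nexists>D. finite D \<and> pstab G D = {id}"
  then have no_base: "\<And>D. finite D \<Longrightarrow> pstab G D \<noteq> {id}" by blast
  define g where "g = from_nat_into G"
  have g: "range g = G"
    unfolding g_def using subgroup_SymG_id[OF G] \<open>countable G\<close> by (intro range_from_nat_into) auto
  define e where "e = from_nat_into (UNIV :: 'a set)"
  have e: "surj e" unfolding e_def by (simp add: range_from_nat_into)
  obtain h \<Gamma> where hs: "\<forall>n. h n \<in> G \<and> finite (\<Gamma> n) \<and> \<Gamma> n \<subseteq> \<Gamma> (Suc n) \<and> e n \<in> \<Gamma> (Suc n) \<and>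
      (\<forall>x\<in>\<Gamma> n. h (Suc n) x = h n x \<and> inv (h (Suc n)) x = inv (h n) x) \<and>
      (\<exists>x\<in>\<Gamma> (Suc n). h (Suc n) x \<noteq> g n x)"
    using no_finite_base_sequence[OF G no_base, of e g] by blast
  have hG: "h n \<in> G" for n using hs by simp
  have inc: "incseq \<Gamma>" using hs by (intro incseq_SucI) simp
  have cover: "\<exists>k. x \<in> \<Gamma> k" for x
  proof -
    obtain n where "x = e n" using e by (metis surj_f_inv_f)
    moreover have "e n \<in> \<Gamma> (Suc n)" using hs by simp
    ultimately show ?thesis by blast
  qed
  have coherent: "h (Suc k) x = h k x \<and> inv (h (Suc k)) x = inv (h k) x" if "x \<in> \<Gamma> k" for k x
    using hs that by simp
  have "bij (h n)" for n using hG by (rule subgroup_SymG_bij[OF G])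
  then obtain H where H: "bij H" "\<And>k x. x \<in> \<Gamma> k \<Longrightarrow> H x = h k x"
    using coherent_bij_limit[of h \<Gamma>, OF _ inc cover coherent] by blast
  have "H \<in> G"
  proof (rule ccontr)
    assume "H \<notin> G"
    then obtain D where D: "finite D" "basic_nbhd H D \<inter> G = {}"
      using closed H(1) by (auto simp: sym_closed_iff[OF subgroup.subset[OF G]])
    obtain k where "D \<subseteq> \<Gamma> k"
      using finite_subset_incseq_cover[OF D(1) inc cover] by blast
    then have "h k \<in> basic_nbhd H D" using H(2) by (auto simp: basic_nbhd_def)
    then show False using D(2) hG by blast
  qed
  then obtain n where "H = g n" using g by blast
  moreover have "\<exists>x\<in>\<Gamma> (Suc n). h (Suc n) x \<noteq> g n x" using hs by simp
  then obtain x where "x \<in> \<Gamma> (Suc n)" "h (Suc n) x \<noteq> g n x" by blast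
  ultimately show False using H(2) by metis
qed

lemma countable_closed_iff_finite_base:
  fixes G :: "('a::countable \<Rightarrow> 'a) set"
  assumes "subgroup G SymG"
  shows "countable G \<and> sym_closed G \<longleftrightarrow> (\<exists>D. finite D \<and> pstab G D = {id})"
proof
  assume "countable G \<and> sym_closed G"
  then show "\<exists>D. finite D \<and> pstab G D = {id}"
    using finite_base_if_countable_closed[OF assms] by blast
next
  assume "\<exists>D. finite D \<and> pstab G D = {id}"
  then obtain D where "finite D" "pstab G D = {id}" by blast
  then show "countable G \<and> sym_closed G"
    using countable_if_finite_base[OF assms] sym_closed_if_finite_base[OF assms] by blast
qed

lemma finite_base_iff_sym_discrete:
  assumes "subgroup G SymG"
  shows "(\<exists>D. finite D \<and> pstab G D = {id}) \<longleftrightarrow> sym_discrete G"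
proof
  assume "\<exists>D. finite D \<and> pstab G D = {id}"
  then obtain D where "finite D" "pstab G D = {id}" by blast
  then show "sym_discrete G" by (rule sym_discrete_if_finite_base[OF assms])
qed (rule finite_base_if_sym_discrete[OF assms])

section \<open>Setwise stabilisers of partitions\<close>

lemma uncountable_Pow:
  assumes "infinite B"
  shows "uncountable (Pow B)"
proof
  assume "countable (Pow B)"
  obtain b :: "nat \<Rightarrow> 'a" where b: "inj b" "range b \<subseteq> B"
    using infinite_countable_subset[OF assms] by blast
  have "range (\<lambda>S. b ` S) \<subseteq> Pow B" using b(2) by auto
  then have "countable (range (\<lambda>S. b ` S))" using \<open>countable (Pow B)\<close> by (rule countable_subset)
  moreover have "inj (\<lambda>S. b ` S)" by (rule injI) (simp add: inj_image_eq_iff[OF b(1)])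
  ultimately have "countable (UNIV :: nat set set)" by (rule countable_image_inj_on)
  then have "surj (from_nat_into (UNIV :: nat set set))" by (simp add: range_from_nat_into)
  then obtain m where "from_nat_into UNIV m = {n. n \<notin> from_nat_into UNIV n}"
    by (metis surj_f_inv_f)
  then show False by blast
qed

definition block_of :: "'a set set \<Rightarrow> 'a \<Rightarrow> 'a set" where
  "block_of A x = (THE \<Sigma>. \<Sigma> \<in> A \<and> x \<in> \<Sigma>)"

lemma block_of_eq:
  assumes "partition_on UNIV A" "\<Sigma> \<in> A" "x \<in> \<Sigma>"
  shows "block_of A x = \<Sigma>"
  unfolding block_of_def
  using assms disjointD[OF partition_onD2[OF assms(1)]] by (intro the_equality) blast+

lemma block_of_mem:
  assumes "partition_on UNIV A"
  shows "block_of A x \<in> A" "x \<in> block_of A x"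
proof -
  obtain \<Sigma> where "\<Sigma> \<in> A" "x \<in> \<Sigma>" using partition_onD1[OF assms] by blast
  then show "block_of A x \<in> A" "x \<in> block_of A x" using block_of_eq[OF assms] by simp_all
qed

lemma blockwise_perm_in_setwise_stab:
  assumes A: "partition_on UNIV A" and p: "\<And>\<Sigma>. \<Sigma> \<in> A \<Longrightarrow> p \<Sigma> permutes \<Sigma>"
  shows "(\<lambda>x. p (block_of A x) x) \<in> setwise_stab A"
proof -
  let ?q = "\<lambda>x. p (block_of A x) x"
  have q_in: "?q x \<in> block_of A x" for x
    using p[OF block_of_mem(1)[OF A]] block_of_mem(2)[OF A] by (simp add: permutes_in_image)
  have block_q: "block_of A (?q x) = block_of A x" for x
    using block_of_eq[OF A block_of_mem(1)[OF A] q_in] .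
  have "inj ?q"
  proof (rule injI)
    fix x y assume eq: "?q x = ?q y"
    then have "block_of A x = block_of A y" using block_q by metis
    with eq show "x = y"
      using permutes_inj[OF p[OF block_of_mem(1)[OF A]]] by (metis injD)
  qed
  moreover have "surj ?q"
  proof (rule surjI)
    fix y
    let ?\<Sigma> = "block_of A y"
    have "inv (p ?\<Sigma>) y \<in> ?\<Sigma>"
      using permutes_in_image[OF permutes_inv[OF p[OF block_of_mem(1)[OF A]]]] block_of_mem(2)[OF A]
      by blast
    then have "block_of A (inv (p ?\<Sigma>) y) = ?\<Sigma>" by (rule block_of_eq[OF A block_of_mem(1)[OF A]])
    then show "?q (inv (p ?\<Sigma>) y) = y"
      using permutes_inverses(1)[OF p[OF block_of_mem(1)[OF A]]] by simp
  qed
  moreover have "?q ` \<Sigma> = p \<Sigma> ` \<Sigma>" if "\<Sigma> \<in> A" for \<Sigma>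
    by (intro image_cong) (simp_all add: block_of_eq[OF A that])
  then have "?q ` \<Sigma> = \<Sigma>" if "\<Sigma> \<in> A" for \<Sigma>
    using that p by (simp add: permutes_image)
  ultimately show ?thesis by (simp add: setwise_stab_def carrier_SymG bij_def)
qed

lemma uncountable_setwise_stab:
  assumes A: "partition_on UNIV A" and many: "infinite {\<Sigma>\<in>A. card \<Sigma> > 1}"
  shows "uncountable (setwise_stab A)"
proof
  assume countable: "countable (setwise_stab A)"
  let ?B = "{\<Sigma>\<in>A. card \<Sigma> > 1}"
  have "\<exists>a c. a \<in> \<Sigma> \<and> c \<in> \<Sigma> \<and> a \<noteq> c" if "\<Sigma> \<in> ?B" for \<Sigma>
  proof -
    have gt: "card \<Sigma> > 1" using that by simp
    then have "finite \<Sigma>" by (intro card_ge_0_finite) simp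
    moreover have "\<not> card \<Sigma> \<le> Suc 0" using gt by simp
    ultimately show ?thesis using card_le_Suc0_iff_eq by blast
  qed
  then obtain a c where ac: "\<And>\<Sigma>. \<Sigma> \<in> ?B \<Longrightarrow> a \<Sigma> \<in> \<Sigma> \<and> c \<Sigma> \<in> \<Sigma> \<and> a \<Sigma> \<noteq> c \<Sigma>" by metis
  define \<pi> where "\<pi> \<S> \<Sigma> = (if \<Sigma> \<in> \<S> then Transposition.transpose (a \<Sigma>) (c \<Sigma>) else id)"
    for \<S> \<Sigma>
  define \<tau> where "\<tau> \<S> x = \<pi> \<S> (block_of A x) x" for \<S> x
  have "\<tau> \<S> \<in> setwise_stab A" if "\<S> \<subseteq> ?B" for \<S>
    unfolding \<tau>_def
  proof (rule blockwise_perm_in_setwise_stab[OF A])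
    fix \<Sigma> assume "\<Sigma> \<in> A"
    show "\<pi> \<S> \<Sigma> permutes \<Sigma>"
      using that ac by (auto simp: \<pi>_def intro: permutes_swap_id)
  qed
  then have "\<tau> ` Pow ?B \<subseteq> setwise_stab A" by blast
  moreover have "inj_on \<tau> (Pow ?B)"
  proof (rule inj_onI)
    fix \<S> \<S>' assume \<S>: "\<S> \<in> Pow ?B" "\<S>' \<in> Pow ?B" and eq: "\<tau> \<S> = \<tau> \<S>'"
    have "\<Sigma> \<in> \<S> \<longleftrightarrow> \<Sigma> \<in> \<S>'" if "\<Sigma> \<in> ?B" for \<Sigma>
    proof -
      have "block_of A (a \<Sigma>) = \<Sigma>" using ac[OF that] that by (intro block_of_eq[OF A]) auto
      then have "\<tau> \<S>'' (a \<Sigma>) = (if \<Sigma> \<in> \<S>'' then c \<Sigma> else a \<Sigma>)" for \<S>''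
        by (simp add: \<tau>_def \<pi>_def)
      then show ?thesis using eq ac[OF that] by metis
    qed
    with \<S> show "\<S> = \<S>'" by blast
  qed
  ultimately have "countable (Pow ?B)"
    using countable by (meson countable_image_inj_on countable_subset)
  then show False using uncountable_Pow[OF many] by blast
qed

section \<open>Countable sets of permutations lie in finitely generated subgroups\<close>

lemma generate_finite_support:
  assumes "group G" and "x \<in> generate G S"
  shows "\<exists>F\<subseteq>S. finite F \<and> x \<in> generate G F"
  using assms(2)
proof induction
  case one
  show ?case by (intro exI[of _ "{}"]) (simp add: generate.one)
next
  case (incl h)
  then show ?case by (intro exI[of _ "{h}"]) (simp add: generate.incl)
next
  case (inv h)
  then show ?case by (intro exI[of _ "{h}"]) (simp add: generate.inv)
next
  case (eng x y)
  then obtain F1 F2 where "F1 \<subseteq> S" "finite F1" "x \<in> generate G F1"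
    "F2 \<subseteq> S" "finite F2" "y \<in> generate G F2" by blast
  moreover have "generate G F1 \<subseteq> generate G (F1 \<union> F2)" "generate G F2 \<subseteq> generate G (F1 \<union> F2)"
    using group.mono_generate[OF assms(1)] by auto
  ultimately show ?case by (intro exI[of _ "F1 \<union> F2"]) (auto intro: generate.eng)
qed

lemma countable_subset_generate:
  assumes "group G" "countable C" "C \<subseteq> generate G S"
  shows "\<exists>S'\<subseteq>S. countable S' \<and> C \<subseteq> generate G S'"
proof -
  have "\<forall>x\<in>C. \<exists>F. F \<subseteq> S \<and> finite F \<and> x \<in> generate G F"
    using generate_finite_support[OF assms(1)] assms(3) by blast
  then obtain F where F: "\<forall>x\<in>C. F x \<subseteq> S \<and> finite (F x) \<and> x \<in> generate G (F x)"
    by (rule bchoice[elim_format]) blast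
  have "countable (\<Union>x\<in>C. F x)"
    by (rule countable_UN[OF assms(2)]) (use F in \<open>auto intro: countable_finite\<close>)
  moreover have "generate G (F x) \<subseteq> generate G (\<Union>x\<in>C. F x)" if "x \<in> C" for x
    using that by (intro group.mono_generate[OF assms(1)]) blast
  ultimately show ?thesis
    using F by (intro exI[of _ "\<Union>x\<in>C. F x"]) blast
qed

lemma bij_betw_infinite_countable:
  fixes S T :: "'a::countable set"
  assumes "infinite S" "infinite T"
  obtains f where "bij_betw f S T"
proof -
  obtain e1 :: "'a \<Rightarrow> nat" where "bij_betw e1 S UNIV"
    using countableE_infinite[OF countableI_type assms(1)] by blast
  moreover obtain e2 :: "'a \<Rightarrow> nat" where "bij_betw e2 T UNIV"
    using countableE_infinite[OF countableI_type assms(2)] by blast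
  ultimately show thesis
    using that bij_betw_trans bij_betw_inv_into by blast
qed

lemma permutes_moving:
  fixes Y S T :: "'a::countable set"
  assumes "S \<subseteq> Y" "T \<subseteq> Y" "infinite S" "infinite T" "infinite (Y - S)" "infinite (Y - T)"
  obtains w where "w permutes Y" "w ` S = T"
proof -
  obtain f1 where f1: "bij_betw f1 S T"
    using bij_betw_infinite_countable[OF assms(3,4)] .
  obtain f2 where f2: "bij_betw f2 (Y - S) (Y - T)"
    using bij_betw_infinite_countable[OF assms(5,6)] .
  define w where "w x = (if x \<in> S then f1 x else if x \<in> Y then f2 x else x)" for x
  have "bij_betw w S T"
    using f1 by (rule bij_betw_cong[THEN iffD2, rotated]) (simp add: w_def)
  moreover have "bij_betw w (Y - S) (Y - T)"
    using f2 by (rule bij_betw_cong[THEN iffD2, rotated]) (simp add: w_def)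
  ultimately have "bij_betw w (S \<union> (Y - S)) (T \<union> (Y - T))"
    by (rule bij_betw_combine) blast
  then have "w permutes Y"
    using assms(1,2) by (intro bij_imp_permutes) (auto simp: w_def Un_absorb1)
  moreover have "w ` S = T"
    using \<open>bij_betw w S T\<close> by (simp add: bij_betw_def)
  ultimately show thesis by (rule that)
qed

lemma permutes_moving_part:
  fixes Y J E :: "'a::countable set"
  assumes "J \<subseteq> Y" "infinite J" "infinite (Y - J)" "infinite (E \<inter> Y)" "infinite (Y - E)"
  obtains w where "w permutes Y" "w ` E = J \<union> (E - Y)"
proof -
  have "Y - E \<inter> Y = Y - E" by blast
  then obtain w where w: "w permutes Y" "w ` (E \<inter> Y) = J"
    using permutes_moving[of "E \<inter> Y" Y J] assms by auto
  have "w ` (E - Y) = E - Y"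
    using w(1) by (auto simp: permutes_not_in image_iff)
  then have "w ` E = J \<union> (E - Y)"
    using w(2) by (metis Int_Diff_Un image_Un)
  with w(1) show thesis by (rule that)
qed

lemma permutes_split_invariant:
  assumes "bij h" "h ` Z = Z"
  shows "restrict_id h Z permutes Z" "restrict_id h (- Z) permutes - Z"
    and "h = restrict_id h Z \<circ> restrict_id h (- Z)"
proof -
  have inj: "inj_on h A" for A
    using bij_is_inj[OF assms(1)] by (rule inj_on_subset) simp
  have "h ` (- Z) = - Z" using assms by (simp add: bij_image_Compl_eq)
  then have "bij_betw h Z Z" "bij_betw h (- Z) (- Z)"
    using assms(2) inj by (simp_all add: bij_betw_def)
  show "restrict_id h Z permutes Z" "restrict_id h (- Z) permutes - Z"
    by (rule permutes_restrict_id, fact)+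
  show "h = restrict_id h Z \<circ> restrict_id h (- Z)"
    using \<open>h ` (- Z) = - Z\<close> by (auto simp: fun_eq_iff restrict_id_def)
qed

locale permutes_cover =
  fixes Y1 Y2 I :: "'a::countable set"
  assumes cover: "Y1 \<union> Y2 = UNIV"
    and core: "I \<subseteq> Y1 \<inter> Y2" "infinite I" "infinite (Y1 \<inter> Y2 - I)"
    and infinite_Y1_Y2: "infinite (Y1 - Y2)" and infinite_Y2_Y1: "infinite (Y2 - Y1)"
begin

definition W :: "('a \<Rightarrow> 'a) set" where
  "W = generate SymG ({w. w permutes Y1} \<union> {w. w permutes Y2})"

text \<open>Since \<open>Z \<subseteq> Y\<^sub>1\<close> and \<open>- Z \<subseteq> Y\<^sub>2\<close>, a permutation preserving \<open>Z\<close> splits into a permutation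
  of \<open>Y\<^sub>1\<close> and one of \<open>Y\<^sub>2\<close>; it remains to move \<open>g ` Z\<close> back onto \<open>Z\<close> inside \<open>W\<close>.\<close>

definition Z :: "'a set" where
  "Z = (Y1 - Y2) \<union> I"

lemma subgroup_W: "subgroup W SymG"
  unfolding W_def by (rule subgroup_generate_SymG) (auto simp: carrier_SymG permutes_bij)

lemma permutes_in_W: "w permutes Y1 \<or> w permutes Y2 \<Longrightarrow> w \<in> W"
  unfolding W_def by (auto intro: generate.incl)

lemma infinite_Y1_Z: "infinite (Y1 - Z)"
  using core(3) by (rule infinite_super[rotated]) (auto simp: Z_def)

lemma reach_Z_from_Y1:
  assumes "E \<subseteq> Y1" "infinite E" "infinite (Y1 - E)"
  shows "\<exists>w\<in>W. w ` E = Z"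
proof -
  have "Z \<subseteq> Y1" "infinite Z" using core(1) infinite_Y1_Y2 by (auto simp: Z_def)
  then obtain w where "w permutes Y1" "w ` E = Z"
    using permutes_moving[OF assms(1) _ assms(2) _ assms(3) infinite_Y1_Z] by blast
  then show ?thesis using permutes_in_W by blast
qed

lemma reach_Z_from_Y2_part:
  assumes "infinite (E \<inter> Y2)" "infinite (Y2 - E)"
  shows "\<exists>w\<in>W. w ` E = Z"
proof -
  have "Y2 - I \<supseteq> Y2 - Y1" using core(1) by blast
  then have "infinite (Y2 - I)" using infinite_Y2_Y1 by (rule infinite_super)
  then obtain w2 where w2: "w2 permutes Y2" "w2 ` E = I \<union> (E - Y2)"
    using permutes_moving_part[OF _ core(2) _ assms] core(1) by blast
  have "I \<union> (E - Y2) \<subseteq> Y1" using core(1) cover by blast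
  moreover have "infinite (I \<union> (E - Y2))" using core(2) by simp
  moreover have "Y1 \<inter> Y2 - I \<subseteq> Y1 - (I \<union> (E - Y2))" by blast
  then have "infinite (Y1 - (I \<union> (E - Y2)))" using core(3) by (rule infinite_super)
  ultimately obtain w1 where "w1 \<in> W" "w1 ` (I \<union> (E - Y2)) = Z"
    using reach_Z_from_Y1 by blast
  moreover have "w2 \<in> W" using w2(1) permutes_in_W by blast
  ultimately show ?thesis
    using w2(2) subgroup_SymG_comp[OF subgroup_W] by (metis image_comp)
qed

lemma reach_Z:
  assumes "infinite E" "infinite (- E)"
  shows "\<exists>w\<in>W. w ` E = Z"
proof (cases "infinite (E \<inter> Y2) \<and> infinite (Y2 - E)")
  case True
  then show ?thesis using reach_Z_from_Y2_part by blast
next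
  case False
  have "infinite (E \<inter> Y1) \<and> infinite (Y1 - E)"
  proof (cases "finite (E \<inter> Y2)")
    case True
    have "E - E \<inter> Y2 \<subseteq> E \<inter> Y1" "Y1 \<inter> Y2 - E \<inter> Y2 \<subseteq> Y1 - E" using cover by blast+
    moreover have "infinite (Y1 \<inter> Y2)" using core by (metis infinite_super)
    ultimately show ?thesis using True assms(1) by (metis Diff_infinite_finite infinite_super)
  next
    case False
    then have fin: "finite (Y2 - E)" using \<open>\<not> (infinite (E \<inter> Y2) \<and> infinite (Y2 - E))\<close> by blast
    have "Y1 \<inter> Y2 - (Y2 - E) \<subseteq> E \<inter> Y1" "- E - (Y2 - E) \<subseteq> Y1 - E" using cover by blast+
    moreover have "infinite (Y1 \<inter> Y2)" using core by (metis infinite_super)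
    ultimately show ?thesis using fin assms(2) by (metis Diff_infinite_finite infinite_super)
  qed
  moreover have "Y1 - I \<supseteq> Y1 - Y2" using core(1) by blast
  then have "infinite (Y1 - I)" using infinite_Y1_Y2 by (rule infinite_super)
  ultimately obtain w1 where w1: "w1 permutes Y1" "w1 ` E = I \<union> (E - Y1)"
    using permutes_moving_part[OF _ core(2)] core(1) by (metis le_inf_iff)
  have "infinite ((I \<union> (E - Y1)) \<inter> Y2)"
    using core(2) by (rule infinite_super[rotated]) (use core(1) in blast)
  moreover have "infinite (Y2 - (I \<union> (E - Y1)))"
    using core(3) by (rule infinite_super[rotated]) blast
  ultimately obtain w2 where "w2 \<in> W" "w2 ` (I \<union> (E - Y1)) = Z"
    using reach_Z_from_Y2_part by blast
  moreover have "w1 \<in> W" using w1(1) permutes_in_W by blast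
  ultimately show ?thesis
    using w1(2) subgroup_SymG_comp[OF subgroup_W] by (metis image_comp)
qed

lemma bij_in_W:
  assumes g: "bij g"
  shows "g \<in> W"
proof -
  have "Z \<subseteq> Y1" "- Z \<subseteq> Y2" using core(1) cover by (auto simp: Z_def)
  have "infinite Z" using core(2) by (simp add: Z_def)
  moreover have "Y1 \<inter> Y2 - I \<subseteq> - Z" by (auto simp: Z_def)
  then have "infinite (- Z)" using core(3) by (rule infinite_super)
  moreover have "inj_on g A" for A
    using bij_is_inj[OF g] by (rule inj_on_subset) simp
  ultimately have "infinite (g ` Z)" "infinite (- (g ` Z))"
    using g by (simp_all add: finite_image_iff flip: bij_image_Compl_eq)
  then obtain w where w: "w \<in> W" "w ` (g ` Z) = Z" using reach_Z by blast
  define h where "h = w \<circ> g"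
  have "bij w" using w(1) subgroup_SymG_bij[OF subgroup_W] by blast
  then have "bij h" "h ` Z = Z" using g w(2) by (simp_all add: h_def bij_comp image_comp)
  then have "h \<in> W"
    using permutes_split_invariant[of h Z] permutes_subset \<open>Z \<subseteq> Y1\<close> \<open>- Z \<subseteq> Y2\<close>
      permutes_in_W subgroup_SymG_comp[OF subgroup_W] by metis
  moreover have "g = inv w \<circ> h"
    using \<open>bij w\<close> by (simp add: h_def comp_assoc[symmetric] bij_is_inj)
  ultimately show ?thesis
    using w(1) subgroup_SymG_comp[OF subgroup_W] subgroup_SymG_inv[OF subgroup_W] by metis
qed

end

lemma generate_permutes_cover:
  fixes Y1 Y2 :: "'a::countable set"
  assumes "Y1 \<union> Y2 = UNIV" "infinite (Y1 - Y2)" "infinite (Y2 - Y1)" "infinite (Y1 \<inter> Y2)"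
  shows "generate SymG ({w. w permutes Y1} \<union> {w. w permutes Y2}) = carrier SymG"
proof
  obtain I I' where I: "I \<subseteq> Y1 \<inter> Y2" "I' \<subseteq> Y1 \<inter> Y2" "infinite I" "infinite I'" "I \<inter> I' = {}"
    using infinite_split[OF assms(4)] by blast
  have "I' \<subseteq> Y1 \<inter> Y2 - I" using I(2,5) by blast
  then have "infinite (Y1 \<inter> Y2 - I)" using I(4) by (rule infinite_super)
  then interpret permutes_cover Y1 Y2 I
    using assms I(1,3) by unfold_locales
  show "carrier SymG \<subseteq> generate SymG ({w. w permutes Y1} \<union> {w. w permutes Y2})"
    using bij_in_W by (auto simp: carrier_SymG W_def)
  show "generate SymG ({w. w permutes Y1} \<union> {w. w permutes Y2}) \<subseteq> carrier SymG"
    by (rule subgroup.subset[OF subgroup_generate_SymG]) (auto simp: carrier_SymG permutes_bij)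
qed

text \<open>A point \<open>(n, i, k)\<close> of the grid lies in column \<open>n\<close> and row \<open>i\<close>. The permutation
  \<open>grid_lift M\<close> applies \<open>M n\<close> to the upper half (\<open>i \<ge> 0\<close>) of column \<open>n\<close>; conjugating it by a
  power of \<open>grid_shift 1\<close> moves \<open>M j\<close> into column 0, and its commutator with \<open>grid_climb\<close>,
  which raises column 0 by one row, only survives on row 0 of column 0, i.e. on \<open>grid_base\<close>.\<close>

type_synonym grid = "int \<times> int \<times> nat"

definition grid_shift :: "int \<Rightarrow> grid \<Rightarrow> grid" where
  "grid_shift m = (\<lambda>(n, i, k). (n + m, i, k))"

definition grid_climb :: "grid \<Rightarrow> grid" where
  "grid_climb = (\<lambda>(n, i, k). if n = 0 then (n, i + 1, k) else (n, i, k))"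

definition grid_lift :: "(int \<Rightarrow> nat \<Rightarrow> nat) \<Rightarrow> grid \<Rightarrow> grid" where
  "grid_lift M = (\<lambda>(n, i, k). if 0 \<le> i then (n, i, M n k) else (n, i, k))"

definition grid_base :: "grid set" where
  "grid_base = range (\<lambda>k. (0, 0, k))"

definition base_perm :: "(nat \<Rightarrow> nat) \<Rightarrow> grid \<Rightarrow> grid" where
  "base_perm \<mu> = (\<lambda>(n, i, k). if n = 0 \<and> i = 0 then (n, i, \<mu> k) else (n, i, k))"

lemma grid_eqI: "(\<And>n i k. f (n, i, k) = g (n, i, k)) \<Longrightarrow> f = (g :: grid \<Rightarrow> 'b)"
  by (rule ext) (metis prod_cases3)

lemma grid_shift_add: "grid_shift a \<circ> grid_shift b = grid_shift (a + b)"
  by (rule grid_eqI) (simp add: grid_shift_def algebra_simps)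

lemma grid_shift_0: "grid_shift 0 = id"
  by (rule grid_eqI) (simp add: grid_shift_def)

lemma bij_grid_shift: "bij (grid_shift m)"
  using o_bij[of "grid_shift (- m)" "grid_shift m"] by (simp add: grid_shift_add grid_shift_0)

lemma inv_grid_shift: "inv (grid_shift m) = grid_shift (- m)"
  by (rule inv_unique_comp) (simp_all add: grid_shift_add grid_shift_0)

lemma bij_grid_climb: "bij grid_climb"
proof (rule o_bij)
  define descend :: "grid \<Rightarrow> grid" where
    "descend = (\<lambda>(n, i, k). if n = 0 then (n, i - 1, k) else (n, i, k))"
  show "descend \<circ> grid_climb = id" by (rule grid_eqI) (simp add: grid_climb_def descend_def)
  show "grid_climb \<circ> descend = id" by (rule grid_eqI) (simp add: grid_climb_def descend_def)
qed

lemma bij_grid_lift: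
  assumes "\<And>n. bij (M n)"
  shows "bij (grid_lift M)"
proof (rule o_bij)
  have inv: "inv (M n) (M n k) = k" "M n (inv (M n) k) = k" for n k
    using assms[of n] by (simp_all add: bij_is_inj bij_is_surj surj_f_inv_f)
  show "grid_lift (\<lambda>n. inv (M n)) \<circ> grid_lift M = id"
    by (rule grid_eqI) (simp add: grid_lift_def inv)
  show "grid_lift M \<circ> grid_lift (\<lambda>n. inv (M n)) = id"
    by (rule grid_eqI) (simp add: grid_lift_def inv)
qed

lemma grid_lift_conj_shift: "grid_shift (- j) \<circ> grid_lift M \<circ> grid_shift j = grid_lift (\<lambda>n. M (n + j))"
  by (rule grid_eqI) (simp add: grid_shift_def grid_lift_def)

lemma grid_lift_climb: "grid_lift M \<circ> grid_climb = base_perm (M 0) \<circ> grid_climb \<circ> grid_lift M"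
  by (rule grid_eqI) (auto simp: grid_lift_def grid_climb_def base_perm_def)

lemma permutes_grid_base:
  assumes "p permutes grid_base"
  shows "\<exists>\<mu>. bij \<mu> \<and> p = base_perm \<mu>"
proof -
  define b :: "nat \<Rightarrow> grid" where "b k = (0, 0, k)" for k
  have b: "bij_betw b UNIV grid_base" "inj b"
    by (auto simp: bij_betw_def inj_def b_def grid_base_def)
  have inv_b: "inv_into UNIV b (0, 0, k) = k" for k
    using inv_f_f[OF b(2), of k] by (simp add: b_def)
  obtain \<mu> where "\<mu> permutes UNIV"
    "p = (\<lambda>x. if x \<in> grid_base then b (\<mu> (inv_into UNIV b x)) else x)"
    using bij_betw_permutations[OF b(1)] assms by (auto simp: bij_betw_def)
  moreover have "(\<lambda>x. if x \<in> grid_base then b (\<mu> (inv_into UNIV b x)) else x) = base_perm \<mu>"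
    by (rule grid_eqI) (auto simp: grid_base_def base_perm_def b_def inv_b)
  ultimately show ?thesis by (metis permutes_bij)
qed

lemma base_perm_in_subgroup:
  assumes H: "subgroup H SymG" and M: "\<And>n. bij (M n)"
    and gens: "grid_lift M \<in> H" "grid_shift 1 \<in> H" "grid_climb \<in> H"
  shows "base_perm (M j) \<in> H"
proof -
  have shift: "grid_shift m \<in> H" for m
  proof (induction m rule: int_induct[where k = 0])
    case base
    show ?case using subgroup_SymG_id[OF H] by (simp only: grid_shift_0)
  next
    case (step1 m)
    then have "grid_shift 1 \<circ> grid_shift m \<in> H" using subgroup_SymG_comp[OF H gens(2)] by blast
    then show ?case by (simp add: grid_shift_add add.commute)
  next
    case (step2 m)
    then have "inv (grid_shift 1) \<circ> grid_shift m \<in> H"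
      using subgroup_SymG_comp[OF H subgroup_SymG_inv[OF H gens(2)]] by blast
    then show ?case by (simp add: inv_grid_shift grid_shift_add)
  qed
  define L where "L = grid_lift (\<lambda>n. M (n + j))"
  have "grid_shift (- j) \<circ> grid_lift M \<circ> grid_shift j \<in> H"
    by (intro subgroup_SymG_comp[OF H] shift gens(1))
  then have "L \<in> H" by (simp add: L_def grid_lift_conj_shift)
  have "bij L" using M by (simp add: L_def bij_grid_lift)
  have commute: "L \<circ> grid_climb = base_perm (M j) \<circ> grid_climb \<circ> L"
    using grid_lift_climb[of "\<lambda>n. M (n + j)"] by (simp add: L_def)
  have "L \<circ> inv L = id" "grid_climb \<circ> inv grid_climb = id"
    using \<open>bij L\<close> bij_grid_climb by (simp_all add: bij_is_surj flip: surj_iff)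
  then have "L \<circ> grid_climb \<circ> inv L \<circ> inv grid_climb = base_perm (M j)"
    unfolding commute by (simp add: comp_assoc)
  moreover have "L \<circ> grid_climb \<circ> inv L \<circ> inv grid_climb \<in> H"
    using \<open>L \<in> H\<close> gens(3)
    by (intro subgroup_SymG_comp[OF H] subgroup_SymG_inv[OF H])
  ultimately show ?thesis by simp
qed

lemma countable_permutes_grid_base_finitely_generated:
  assumes "countable P" and P: "\<And>p. p \<in> P \<Longrightarrow> p permutes grid_base"
  shows "\<exists>U. finite U \<and> U \<subseteq> carrier SymG \<and> P \<subseteq> generate SymG U"
proof -
  have "\<forall>p\<in>P. \<exists>\<mu>. bij \<mu> \<and> p = base_perm \<mu>" using permutes_grid_base P by blast
  then obtain m where m: "\<forall>p\<in>P. bij (m p) \<and> p = base_perm (m p)"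
    by (rule bchoice[elim_format]) blast
  define \<nu> where "\<nu> = from_nat_into (insert id (m ` P))"
  have \<nu>: "range \<nu> = insert id (m ` P)"
    unfolding \<nu>_def using \<open>countable P\<close> by (intro range_from_nat_into) auto
  define M where "M n = \<nu> (nat n)" for n
  have "bij (\<nu> j)" for j
  proof -
    have "\<nu> j \<in> insert id (m ` P)" using \<nu> by blast
    then show ?thesis using m by auto
  qed
  then have M: "bij (M n)" for n by (simp add: M_def)
  define U where "U = {grid_lift M, grid_shift 1, grid_climb}"
  have U: "U \<subseteq> carrier SymG"
    using M by (simp add: U_def carrier_SymG bij_grid_lift bij_grid_shift bij_grid_climb)
  have "p \<in> generate SymG U" if "p \<in> P" for p
  proof -
    have "m p \<in> range \<nu>" using \<nu> that by blast
    then obtain n where "\<nu> n = m p" by (metis rangeE)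
    then have "p = base_perm (M (int n))" using m that by (simp add: M_def)
    also have "\<dots> \<in> generate SymG U"
      using subgroup_generate_SymG[OF U] M
      by (rule base_perm_in_subgroup) (simp_all add: U_def generate.incl)
    finally show ?thesis .
  qed
  then show ?thesis using U by (intro exI[of _ U]) (auto simp: U_def)
qed

lemma infinite_grid_columnI:
  assumes "\<And>k. (a, b, k) \<in> S"
  shows "infinite (S :: grid set)"
proof (rule infinite_super)
  show "range (\<lambda>k. (a, b, k)) \<subseteq> S" using assms by auto
  show "infinite (range (\<lambda>k :: nat. (a, b, k)))" by (rule range_inj_infinite) (simp add: inj_def)
qed

lemma permutes_perm_conj:
  assumes "bij c" "p permutes c ` S"
  shows "perm_conj (inv c) p permutes S"
proof -
  have "bij (perm_conj (inv c) p)"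
    using assms by (simp add: perm_conj_def bij_comp bij_imp_bij_inv permutes_bij)
  moreover have "perm_conj (inv c) p x = x" if "x \<notin> S" for x
  proof -
    have "c x \<notin> c ` S" using that assms(1) by (simp add: bij_is_inj inj_image_mem_iff)
    then have "p (c x) = c x" by (rule permutes_not_in[OF assms(2)])
    then show ?thesis using assms(1) by (simp add: perm_conj_def inv_inv_eq bij_is_inj)
  qed
  ultimately show ?thesis by (simp add: permutes_def bij_iff)
qed

lemma countable_permutes_grid_finitely_generated:
  fixes Y :: "grid set"
  assumes Y: "infinite Y" "infinite (- Y)" and "countable P" and P: "\<And>p. p \<in> P \<Longrightarrow> p permutes Y"
  shows "\<exists>U. finite U \<and> U \<subseteq> carrier SymG \<and> P \<subseteq> generate SymG U"
proof -
  have "infinite grid_base" by (rule infinite_grid_columnI[of 0 0]) (simp add: grid_base_def)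
  moreover have "infinite (UNIV - grid_base)"
    by (rule infinite_grid_columnI[of 1 0]) (auto simp: grid_base_def)
  moreover have "infinite (UNIV - Y)" using Y(2) by (simp add: Compl_eq_Diff_UNIV)
  ultimately obtain c where c: "c permutes UNIV" "c ` grid_base = Y"
    by (rule permutes_moving[OF subset_UNIV subset_UNIV _ Y(1)])
  have "bij c" using c(1) by (rule permutes_bij)
  have "countable (perm_conj (inv c) ` P)" using \<open>countable P\<close> by simp
  moreover have "q permutes grid_base" if "q \<in> perm_conj (inv c) ` P" for q
    using that P c(2) permutes_perm_conj[OF \<open>bij c\<close>] by blast
  ultimately have "\<exists>U. finite U \<and> U \<subseteq> carrier SymG \<and> perm_conj (inv c) ` P \<subseteq> generate SymG U"
    by (rule countable_permutes_grid_base_finitely_generated)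
  then obtain U where U: "finite U" "U \<subseteq> carrier SymG" "perm_conj (inv c) ` P \<subseteq> generate SymG U"
    by blast
  have "P = perm_conj c ` perm_conj (inv c) ` P"
    using perm_conj_inv[OF \<open>bij c\<close>] by (simp add: image_image)
  also have "\<dots> \<subseteq> generate SymG (perm_conj c ` U)"
    using perm_conj_generate[OF \<open>bij c\<close> U(3,2)] .
  finally show ?thesis
    using U(1,2) \<open>bij c\<close> by (intro exI[of _ "perm_conj c ` U"]) (auto simp: carrier_SymG bij_perm_conj)
qed

lemma countable_grid_perms_finitely_generated:
  assumes "countable C" "C \<subseteq> carrier (SymG :: (grid \<Rightarrow> grid) monoid)"
  shows "\<exists>U. finite U \<and> U \<subseteq> carrier SymG \<and> C \<subseteq> generate SymG U"
proof -
  define Y1 :: "grid set" where "Y1 = {x. fst x \<le> 0}"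
  define Y2 :: "grid set" where "Y2 = {x. 0 \<le> fst x}"
  have neg: "infinite (Y1 - Y2)" "infinite (- Y2)"
    by (rule infinite_grid_columnI[of "-1" 0], simp add: Y1_def Y2_def)+
  have pos: "infinite (Y2 - Y1)" "infinite (- Y1)"
    by (rule infinite_grid_columnI[of 1 0], simp add: Y1_def Y2_def)+
  have zero: "infinite (Y1 \<inter> Y2)" "infinite Y1" "infinite Y2"
    by (rule infinite_grid_columnI[of 0 0], simp add: Y1_def Y2_def)+
  have "Y1 \<union> Y2 = UNIV" by (auto simp: Y1_def Y2_def)
  then have "C \<subseteq> generate SymG ({w. w permutes Y1} \<union> {w. w permutes Y2})"
    using generate_permutes_cover[of Y1 Y2] neg(1) pos(1) zero(1) assms(2) by simp
  then obtain S where S: "S \<subseteq> {w. w permutes Y1} \<union> {w. w permutes Y2}" "countable S"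
    "C \<subseteq> generate SymG S"
    using countable_subset_generate[OF group_SymG assms(1)] by blast
  have "countable {w\<in>S. w permutes Y1}" using S(2) by (simp add: countable_subset[of _ S])
  with zero(2) pos(2) have "\<exists>U. finite U \<and> U \<subseteq> carrier SymG \<and> {w\<in>S. w permutes Y1} \<subseteq> generate SymG U"
    by (rule countable_permutes_grid_finitely_generated) simp
  then obtain U1
    where U1: "finite U1" "U1 \<subseteq> carrier SymG" "{w\<in>S. w permutes Y1} \<subseteq> generate SymG U1"
    by blast
  have "countable {w\<in>S. w permutes Y2}" using S(2) by (simp add: countable_subset[of _ S])
  with zero(3) neg(2) have "\<exists>U. finite U \<and> U \<subseteq> carrier SymG \<and> {w\<in>S. w permutes Y2} \<subseteq> generate SymG U"
    by (rule countable_permutes_grid_finitely_generated) simp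
  then obtain U2
    where U2: "finite U2" "U2 \<subseteq> carrier SymG" "{w\<in>S. w permutes Y2} \<subseteq> generate SymG U2"
    by blast
  have U: "U1 \<union> U2 \<subseteq> carrier SymG" using U1(2) U2(2) by simp
  have "generate SymG U1 \<subseteq> generate SymG (U1 \<union> U2)" "generate SymG U2 \<subseteq> generate SymG (U1 \<union> U2)"
    by (rule group.mono_generate[OF group_SymG], simp)+
  then have "S \<subseteq> generate SymG (U1 \<union> U2)" using S(1) U1(3) U2(3) by blast
  then have "generate SymG S \<subseteq> generate SymG (U1 \<union> U2)"
    by (rule group.generate_subgroup_incl[OF group_SymG _ subgroup_generate_SymG[OF U]])
  then show ?thesis using S(3) U U1(1) U2(1) by (intro exI[of _ "U1 \<union> U2"]) auto
qed

lemma countable_perms_finitely_generated: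
  fixes C :: "('a::countable \<Rightarrow> 'a) set"
  assumes inf: "infinite (UNIV :: 'a set)" and "countable C" "C \<subseteq> carrier SymG"
  shows "\<exists>U. finite U \<and> U \<subseteq> carrier SymG \<and> C \<subseteq> generate SymG U"
proof -
  obtain e1 :: "'a \<Rightarrow> nat" where "bij e1"
    using countableE_infinite[OF countableI_type inf] by blast
  obtain e2 :: "grid \<Rightarrow> nat" where "bij e2"
    using countableE_infinite[OF countableI_type infinite_grid_columnI[of 0 0 UNIV]] by blast
  define e where "e = inv e1 \<circ> e2"
  have e: "bij e" using \<open>bij e1\<close> \<open>bij e2\<close> by (simp add: e_def bij_comp bij_imp_bij_inv)
  have "countable (perm_conj (inv e) ` C)" using assms(2) by simp
  moreover have "perm_conj (inv e) ` C \<subseteq> carrier SymG"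
    using e assms(3) by (auto simp: carrier_SymG bij_perm_conj bij_imp_bij_inv)
  ultimately have "\<exists>U. finite U \<and> U \<subseteq> carrier SymG \<and> perm_conj (inv e) ` C \<subseteq> generate SymG U"
    by (rule countable_grid_perms_finitely_generated)
  then obtain U where U: "finite U" "U \<subseteq> carrier SymG" "perm_conj (inv e) ` C \<subseteq> generate SymG U"
    by blast
  have "C = perm_conj e ` perm_conj (inv e) ` C"
    using perm_conj_inv[OF e] by (simp add: image_image)
  also have "\<dots> \<subseteq> generate SymG (perm_conj e ` U)"
    using perm_conj_generate[OF e U(3,2)] .
  finally show ?thesis
    using U(1,2) e by (intro exI[of _ "perm_conj e ` U"]) (auto simp: carrier_SymG bij_perm_conj)
qed

section \<open>Comparing subgroups\<close>

lemma countable_if_preceq_countable: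
  assumes "H \<preccurlyeq>\<^sub>S K" "countable K" "K \<subseteq> carrier SymG"
  shows "countable H"
proof -
  obtain U where "finite U" "U \<subseteq> carrier SymG" "H \<subseteq> generate SymG (K \<union> U)"
    using assms(1) by (auto simp: sym_preceq_def)
  moreover have "countable (generate SymG (K \<union> U))"
    using assms(2,3) \<open>finite U\<close> \<open>U \<subseteq> carrier SymG\<close>
    by (intro countable_generate_SymG) (auto intro: countable_finite)
  ultimately show ?thesis by (blast intro: countable_subset)
qed

lemma preceq_if_countable:
  fixes H :: "('a::countable \<Rightarrow> 'a) set"
  assumes "infinite (UNIV :: 'a set)" "countable H" "H \<subseteq> carrier SymG"
  shows "H \<preccurlyeq>\<^sub>S K"
proof -
  obtain U where "finite U" "U \<subseteq> carrier SymG" "H \<subseteq> generate SymG U"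
    using countable_perms_finitely_generated[OF assms] by blast
  moreover have "generate SymG U \<subseteq> generate SymG (K \<union> U)"
    by (simp add: group.mono_generate[OF group_SymG])
  ultimately show ?thesis unfolding sym_preceq_def by blast
qed

lemma trivial_preceq: "{id} \<preccurlyeq>\<^sub>S K"
  unfolding sym_preceq_def using generate.one[of SymG K] by (auto simp: one_SymG)

lemma approx_trivial_iff_countable:
  fixes H :: "('a::countable \<Rightarrow> 'a) set"
  assumes inf: "infinite (UNIV :: 'a set)" and H: "subgroup H SymG"
  shows "H \<approx>\<^sub>S {id} \<longleftrightarrow> countable H"
proof
  assume "H \<approx>\<^sub>S {id}"
  then have "H \<preccurlyeq>\<^sub>S {id}" by (simp add: sym_approx_def)
  then show "countable H" by (rule countable_if_preceq_countable) (simp_all add: carrier_SymG)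
next
  assume "countable H"
  then have "H \<preccurlyeq>\<^sub>S {id}" by (rule preceq_if_countable[OF inf _ subgroup.subset[OF H]])
  then show "H \<approx>\<^sub>S {id}" by (simp add: sym_approx_def trivial_preceq)
qed

lemma countable_prec_setwise_stab:
  fixes G :: "('a::countable \<Rightarrow> 'a) set"
  assumes inf: "infinite (UNIV :: 'a set)" and G: "countable G" "G \<subseteq> carrier SymG"
    and A: "partition_on UNIV A" "infinite {\<Sigma>\<in>A. card \<Sigma> > 1}"
  shows "G \<prec>\<^sub>S setwise_stab A"
proof -
  have "G \<preccurlyeq>\<^sub>S setwise_stab A" by (rule preceq_if_countable[OF inf G])
  moreover have "\<not> setwise_stab A \<preccurlyeq>\<^sub>S G"
    using countable_if_preceq_countable[OF _ G] uncountable_setwise_stab[OF A] by blast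
  ultimately show ?thesis by (simp add: sym_prec_def)
qed

theorem theorem8p1:
  assumes inf: "infinite (UNIV :: 'a::countable set)"
  shows
    "(\<exists>G0. subgroup G0 (SymG :: ('a \<Rightarrow> 'a) monoid) \<and>
        {H. subgroup H (SymG :: ('a \<Rightarrow> 'a) monoid) \<and> H \<approx>\<^sub>S G0}
      = {H. subgroup H (SymG :: ('a \<Rightarrow> 'a) monoid) \<and> countable H})
   \<and> (\<forall>G A. subgroup G (SymG :: ('a \<Rightarrow> 'a) monoid) \<and> countable G
        \<and> partition_on (UNIV :: 'a set) A
        \<and> (\<exists>n::nat. \<forall>\<Sigma>\<in>A. finite \<Sigma> \<and> card \<Sigma> \<le> n)
        \<and> infinite {\<Sigma>\<in>A. card \<Sigma> > 1}
        \<longrightarrow> G \<prec>\<^sub>S setwise_stab A)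
   \<and> (\<forall>G. subgroup G (SymG :: ('a \<Rightarrow> 'a) monoid) \<longrightarrow>
        ((countable G \<and> sym_closed G) \<longleftrightarrow>
           (\<exists>\<Gamma>. finite \<Gamma> \<and> pstab G \<Gamma> = {\<one>\<^bsub>SymG\<^esub>}))
      \<and> ((\<exists>\<Gamma>. finite \<Gamma> \<and> pstab G \<Gamma> = {\<one>\<^bsub>SymG\<^esub>}) \<longleftrightarrow> sym_discrete G))"
proof (intro conjI allI impI)
  show "\<exists>G0. subgroup G0 SymG \<and> {H. subgroup H SymG \<and> H \<approx>\<^sub>S G0} =
      {H. subgroup H (SymG :: ('a \<Rightarrow> 'a) monoid) \<and> countable H}"
  proof (intro exI[of _ "{id}"] conjI Collect_cong)
    show "subgroup {id} SymG"
      using group.triv_subgroup[OF group_SymG] by (simp add: one_SymG)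
    show "subgroup H SymG \<and> H \<approx>\<^sub>S {id} \<longleftrightarrow> subgroup H SymG \<and> countable H"
      for H :: "('a \<Rightarrow> 'a) set"
      using approx_trivial_iff_countable[OF inf, of H] by blast
  qed
next
  fix G :: "('a \<Rightarrow> 'a) set" and A :: "'a set set"
  assume "subgroup G SymG \<and> countable G \<and> partition_on UNIV A
    \<and> (\<exists>n::nat. \<forall>\<Sigma>\<in>A. finite \<Sigma> \<and> card \<Sigma> \<le> n) \<and> infinite {\<Sigma>\<in>A. card \<Sigma> > 1}"
  then show "G \<prec>\<^sub>S setwise_stab A"
    by (intro countable_prec_setwise_stab[OF inf]) (auto dest: subgroup.subset)
next
  fix G :: "('a \<Rightarrow> 'a) set"
  assume G: "subgroup G SymG"
  show "countable G \<and> sym_closed G \<longleftrightarrow> (\<exists>\<Gamma>. finite \<Gamma> \<and> pstab G \<Gamma> = {\<one>\<^bsub>SymG\<^esub>})"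
    using countable_closed_iff_finite_base[OF G] by (simp add: one_SymG)
  show "(\<exists>\<Gamma>. finite \<Gamma> \<and> pstab G \<Gamma> = {\<one>\<^bsub>SymG\<^esub>}) \<longleftrightarrow> sym_discrete G"
    using finite_base_iff_sym_discrete[OF G] by (simp add: one_SymG)
qed

end
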